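(* Let $G=(V,E)$ be a finite, simple, undirected, connected graph and let $\ell\geq 1$ be an integer. A vertex $v\in V$ is a forced vertex of an $\ell$-solid-resolving set of $G$ (i.e., $v$ belongs to every $\ell$-solid-resolving set of $G$) if and only if there exists a set $U\subseteq V$ with $v\notin U$, $|U|\leq\ell$ and $N(v)\subseteq N[U]$.
   Context: $N(v)=\{u\in V: d(v,u)=1\}$ is the open neighbourhood, $N[v]=N(v)\cup\{v\}$, and $N[U]=\bigcup_{u\in U}N[u]$. $d$ is the shortest-path distance; for nonempty $X\subseteq V$, $d(s,X)=\min_{x\in X}d(s,x)$; for $S=\{s_1,\dots,s_k\}$, $\mathcal{D}_S(X)=(d(s_1,X),\dots,d(s_k,X))$. $S\subseteq V$ is an $\ell$-solid-resolving set if $\mathcal{D}_S(X)\neq\mathcal{D}_S(Y)$ for all distinct nonempty $X,Y\subseteq V$ with $|X|\leq\ell$ ($Y$ of arbitrary size). A vertex is forced if no subset of $V\setminus\{v\}$ is an $\ell$-solid-resolving set. *)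

theory Defs
  imports Main
begin

definition simple_graph :: "'a set \<Rightarrow> ('a \<Rightarrow> 'a \<Rightarrow> bool) \<Rightarrow> bool" where
  "simple_graph V E \<longleftrightarrow> finite V \<and> (\<forall>x y. E x y \<longrightarrow> x \<in> V \<and> y \<in> V)
     \<and> (\<forall>x y. E x y \<longrightarrow> E y x) \<and> (\<forall>x. \<not> E x x)"

inductive walk :: "('a \<Rightarrow> 'a \<Rightarrow> bool) \<Rightarrow> nat \<Rightarrow> 'a \<Rightarrow> 'a \<Rightarrow> bool" for E where
  walk0: "walk E 0 x x"
| walkS: "E x y \<Longrightarrow> walk E n y z \<Longrightarrow> walk E (Suc n) x z"

definition connected_graph :: "'a set \<Rightarrow> ('a \<Rightarrow> 'a \<Rightarrow> bool) \<Rightarrow> bool" where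
  "connected_graph V E \<longleftrightarrow> V \<noteq> {} \<and> (\<forall>x\<in>V. \<forall>y\<in>V. \<exists>n. walk E n x y)"

definition dist :: "('a \<Rightarrow> 'a \<Rightarrow> bool) \<Rightarrow> 'a \<Rightarrow> 'a \<Rightarrow> nat" where
  "dist E x y = (LEAST n. walk E n x y)"

definition set_dist :: "('a \<Rightarrow> 'a \<Rightarrow> bool) \<Rightarrow> 'a \<Rightarrow> 'a set \<Rightarrow> nat" where
  "set_dist E s X = Min (dist E s ` X)"

definition open_nbhd :: "'a set \<Rightarrow> ('a \<Rightarrow> 'a \<Rightarrow> bool) \<Rightarrow> 'a \<Rightarrow> 'a set" where
  "open_nbhd V E v = {u \<in> V. dist E v u = 1}"

definition closed_nbhd :: "'a set \<Rightarrow> ('a \<Rightarrow> 'a \<Rightarrow> bool) \<Rightarrow> 'a \<Rightarrow> 'a set" where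
  "closed_nbhd V E v = open_nbhd V E v \<union> {v}"

definition closed_nbhd_set :: "'a set \<Rightarrow> ('a \<Rightarrow> 'a \<Rightarrow> bool) \<Rightarrow> 'a set \<Rightarrow> 'a set" where
  "closed_nbhd_set V E U = (\<Union>u\<in>U. closed_nbhd V E u)"

text \<open>S is l-solid-resolving: D_S(X) \<noteq> D_S(Y) for all distinct nonempty X, Y \<subseteq> V with |X| \<le> l;
  equality of distance vectors means equality in every coordinate s \<in> S.\<close>
definition solid_resolving :: "'a set \<Rightarrow> ('a \<Rightarrow> 'a \<Rightarrow> bool) \<Rightarrow> nat \<Rightarrow> 'a set \<Rightarrow> bool" where
  "solid_resolving V E l S \<longleftrightarrow> S \<subseteq> V \<and>
     (\<forall>X Y. X \<subseteq> V \<longrightarrow> Y \<subseteq> V \<longrightarrow> X \<noteq> {} \<longrightarrow> Y \<noteq> {} \<longrightarrow> X \<noteq> Y \<longrightarrow> card X \<le> l \<longrightarrow>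
        (\<exists>s\<in>S. set_dist E s X \<noteq> set_dist E s Y))"

definition forced_vertex :: "'a set \<Rightarrow> ('a \<Rightarrow> 'a \<Rightarrow> bool) \<Rightarrow> nat \<Rightarrow> 'a \<Rightarrow> bool" where
  "forced_vertex V E l v \<longleftrightarrow> v \<in> V \<and> \<not> (\<exists>S. S \<subseteq> V - {v} \<and> solid_resolving V E l S)"

end

theory Submission
  imports Defs
begin

(* If N(v) \<subseteq> N[U] with v \<notin> U, then every s \<noteq> v has d(s,U) \<le> d(s,v): a shortest path from s
   to v enters v through a neighbour, which lies within distance 1 of U. So U and U \<union> {v}
   have the same distance vector with respect to V - {v}, and no set avoiding v resolves them.
   Conversely, since d(s,X) = 0 iff s \<in> X, two sets with the same distance vector with respect
   to V - {v} have the form U and U \<union> {v}, and equality of their distances at the neighbours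
   of v forces N(v) \<subseteq> N[U]. So if no such U exists, V - {v} itself is l-solid-resolving. *)

lemma walk_append: "walk E n x y \<Longrightarrow> walk E m y z \<Longrightarrow> walk E (n + m) x z"
  by (induction rule: walk.induct) (auto intro: walk.intros)

lemma walk_rev:
  assumes "\<And>x y. E x y \<Longrightarrow> E y x"
  shows "walk E n x y \<Longrightarrow> walk E n y x"
proof (induction rule: walk.induct)
  case (walkS x y n z)
  then show ?case
    using walk_append[of E n z y 1 x] assms by (auto intro: walk.intros)
qed (rule walk0)

lemma walk_0_iff: "walk E 0 x y \<longleftrightarrow> x = y"
  by (auto elim: walk.cases intro: walk.intros)

lemma walk_1_iff: "walk E 1 x y \<longleftrightarrow> E x y"
proof
  assume "walk E 1 x y"
  then show "E x y"
    by (cases rule: walk.cases) (auto simp: walk_0_iff)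
qed (auto intro: walk.intros)

lemma dist_le_walk: "walk E n x y \<Longrightarrow> dist E x y \<le> n"
  unfolding dist_def by (rule Least_le)

lemma set_dist_le: "finite X \<Longrightarrow> u \<in> X \<Longrightarrow> set_dist E s X \<le> dist E s u"
  unfolding set_dist_def by simp

lemma set_dist_attained:
  assumes "finite X" "X \<noteq> {}"
  obtains u where "u \<in> X" "set_dist E s X = dist E s u"
proof -
  have "Min (dist E s ` X) \<in> dist E s ` X"
    using assms by simp
  then show thesis
    using that unfolding set_dist_def by blast
qed

lemma set_dist_insert:
  "finite X \<Longrightarrow> X \<noteq> {} \<Longrightarrow> set_dist E s (insert v X) = min (dist E s v) (set_dist E s X)"
  unfolding set_dist_def by simp

lemma solid_resolvingD:
  assumes "solid_resolving V E l S" "X \<subseteq> V" "Y \<subseteq> V" "X \<noteq> {}" "Y \<noteq> {}" "X \<noteq> Y"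
    "card X \<le> l"
  shows "\<exists>s\<in>S. set_dist E s X \<noteq> set_dist E s Y"
  using assms unfolding solid_resolving_def by blast

locale connected_simple_graph =
  fixes V :: "'a set" and E :: "'a \<Rightarrow> 'a \<Rightarrow> bool"
  assumes simple: "simple_graph V E" and connected: "connected_graph V E"
begin

lemma finite_V: "finite V"
  using simple unfolding simple_graph_def by blast

lemma finite_subset_V: "X \<subseteq> V \<Longrightarrow> finite X"
  using finite_V finite_subset by blast

lemma edge_sym: "E x y \<Longrightarrow> E y x"
  using simple unfolding simple_graph_def by blast

lemma edge_irrefl: "\<not> E x x"
  using simple unfolding simple_graph_def by blast

lemma edge_in_V: "E x y \<Longrightarrow> y \<in> V"
  using simple unfolding simple_graph_def by blast

lemma walk_dist: "x \<in> V \<Longrightarrow> y \<in> V \<Longrightarrow> walk E (dist E x y) x y"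
  using connected unfolding connected_graph_def dist_def by (meson LeastI)

lemma dist_sym: "x \<in> V \<Longrightarrow> y \<in> V \<Longrightarrow> dist E x y = dist E y x"
  by (meson antisym dist_le_walk walk_dist walk_rev edge_sym)

lemma dist_triangle:
  "x \<in> V \<Longrightarrow> y \<in> V \<Longrightarrow> z \<in> V \<Longrightarrow> dist E x z \<le> dist E x y + dist E y z"
  by (meson dist_le_walk walk_dist walk_append)

lemma dist_eq_0_iff: "x \<in> V \<Longrightarrow> y \<in> V \<Longrightarrow> dist E x y = 0 \<longleftrightarrow> x = y"
  by (metis walk_dist dist_le_walk le_zero_eq walk_0_iff)

lemma dist_eq_1_iff:
  assumes "x \<in> V" "y \<in> V"
  shows "dist E x y = 1 \<longleftrightarrow> E x y"
proof
  assume "dist E x y = 1"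
  then show "E x y"
    using walk_dist[OF assms] walk_1_iff by metis
next
  assume "E x y"
  then have "dist E x y \<le> 1"
    using dist_le_walk walk_1_iff by metis
  moreover have "dist E x y \<noteq> 0"
    using \<open>E x y\<close> edge_irrefl dist_eq_0_iff assms by blast
  ultimately show "dist E x y = 1"
    by simp
qed

lemma neighbour_on_shortest_path:
  assumes "s \<in> V" "v \<in> V" "s \<noteq> v"
  obtains w where "w \<in> V" "dist E v w = 1" "dist E s w + 1 \<le> dist E s v"
proof -
  obtain d where d: "dist E v s = Suc d"
    using dist_eq_0_iff assms not0_implies_Suc by blast
  with walk_dist[of v s] assms obtain w where w: "E v w" "walk E d w s"
    by (auto elim: walk.cases)
  then have "w \<in> V" "dist E w s \<le> d"
    using edge_in_V dist_le_walk by auto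
  moreover have "dist E v w = 1"
    using w \<open>w \<in> V\<close> assms dist_eq_1_iff by blast
  ultimately show thesis
    using that d dist_sym assms by simp
qed

lemma open_nbhd_nonempty:
  assumes "card V \<ge> 2" "v \<in> V"
  shows "open_nbhd V E v \<noteq> {}"
proof -
  have "V \<noteq> {v}"
    using assms(1) by auto
  then obtain s where "s \<in> V" "s \<noteq> v"
    using assms(2) by blast
  then show ?thesis
    using neighbour_on_shortest_path[of s v] assms unfolding open_nbhd_def by blast
qed

lemma mem_closed_nbhd_iff:
  assumes "u \<in> V" "w \<in> V"
  shows "w \<in> closed_nbhd V E u \<longleftrightarrow> dist E u w \<le> 1"
proof -
  have "dist E u w \<le> 1 \<longleftrightarrow> dist E u w = 0 \<or> dist E u w = 1"
    by arith
  then show ?thesis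
    using dist_eq_0_iff[OF assms] assms(2) unfolding closed_nbhd_def open_nbhd_def by auto
qed

lemma mem_closed_nbhd_set_iff:
  "U \<subseteq> V \<Longrightarrow> w \<in> V \<Longrightarrow> w \<in> closed_nbhd_set V E U \<longleftrightarrow> (\<exists>u\<in>U. dist E u w \<le> 1)"
  unfolding closed_nbhd_set_def using mem_closed_nbhd_iff by blast

lemma set_dist_eq_0_iff:
  assumes "X \<subseteq> V" "X \<noteq> {}" "s \<in> V"
  shows "set_dist E s X = 0 \<longleftrightarrow> s \<in> X"
proof -
  have "finite X"
    using assms(1) by (rule finite_subset_V)
  show ?thesis
  proof
    assume "set_dist E s X = 0"
    moreover obtain u where "u \<in> X" "set_dist E s X = dist E s u"
      using set_dist_attained[OF \<open>finite X\<close> assms(2)] .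
    ultimately show "s \<in> X"
      using dist_eq_0_iff assms by auto
  next
    assume "s \<in> X"
    then show "set_dist E s X = 0"
      using set_dist_le[OF \<open>finite X\<close>, of s E s] dist_eq_0_iff[of s s] assms(3) by simp
  qed
qed

lemma set_dist_eq_on_imp_Int_eq:
  assumes "X \<subseteq> V" "X \<noteq> {}" "Y \<subseteq> V" "Y \<noteq> {}" "S \<subseteq> V"
    and "\<forall>s\<in>S. set_dist E s X = set_dist E s Y"
  shows "X \<inter> S = Y \<inter> S"
proof -
  have "s \<in> X \<longleftrightarrow> s \<in> Y" if "s \<in> S" for s
    using that assms set_dist_eq_0_iff[of X s] set_dist_eq_0_iff[of Y s] by auto
  then show ?thesis
    by blast
qed

lemma set_dist_insert_eq_iff_open_nbhd_subset:
  assumes U: "U \<subseteq> V" "U \<noteq> {}" "v \<notin> U" and v: "v \<in> V"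
  shows "(\<forall>s\<in>V - {v}. set_dist E s (insert v U) = set_dist E s U)
    \<longleftrightarrow> open_nbhd V E v \<subseteq> closed_nbhd_set V E U"
proof
  assume eq: "\<forall>s\<in>V - {v}. set_dist E s (insert v U) = set_dist E s U"
  show "open_nbhd V E v \<subseteq> closed_nbhd_set V E U"
  proof
    fix w assume "w \<in> open_nbhd V E v"
    then have w: "w \<in> V" "dist E w v = 1"
      using dist_sym v unfolding open_nbhd_def by auto
    then have "w \<noteq> v"
      using dist_eq_0_iff by force
    then have "set_dist E w U \<le> 1"
      using eq w set_dist_le[of "insert v U" v E w] finite_subset_V[OF U(1)] by simp
    moreover obtain u where "u \<in> U" "set_dist E w U = dist E w u"
      using set_dist_attained[OF finite_subset_V[OF U(1)] U(2)] .
    ultimately have "u \<in> U" "dist E u w \<le> 1"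
      using dist_sym w U by auto
    then show "w \<in> closed_nbhd_set V E U"
      using mem_closed_nbhd_set_iff U w by blast
  qed
next
  assume dom: "open_nbhd V E v \<subseteq> closed_nbhd_set V E U"
  show "\<forall>s\<in>V - {v}. set_dist E s (insert v U) = set_dist E s U"
  proof
    fix s assume s: "s \<in> V - {v}"
    then obtain w where w: "w \<in> V" "dist E v w = 1" "dist E s w + 1 \<le> dist E s v"
      using neighbour_on_shortest_path v by blast
    then have "w \<in> closed_nbhd_set V E U"
      using dom unfolding open_nbhd_def by blast
    then obtain u where u: "u \<in> U" "dist E u w \<le> 1"
      using mem_closed_nbhd_set_iff U w by blast
    then have "dist E s u \<le> dist E s w + dist E w u"
      using dist_triangle s w U by blast
    also have "\<dots> \<le> dist E s v"
      using u w dist_sym U by auto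
    finally have "set_dist E s U \<le> dist E s v"
      using set_dist_le[OF finite_subset_V[OF U(1)] u(1), of E s] by linarith
    then show "set_dist E s (insert v U) = set_dist E s U"
      using set_dist_insert[OF finite_subset_V[OF U(1)] U(2)] by simp
  qed
qed

lemma not_solid_resolving_if_nbhd_dominated:
  assumes "card V \<ge> 2" "v \<in> V" "S \<subseteq> V - {v}"
    and U: "U \<subseteq> V" "v \<notin> U" "card U \<le> l"
    and dom: "open_nbhd V E v \<subseteq> closed_nbhd_set V E U"
  shows "\<not> solid_resolving V E l S"
proof
  assume res: "solid_resolving V E l S"
  have "U \<noteq> {}"
    using dom open_nbhd_nonempty[OF assms(1,2)] unfolding closed_nbhd_set_def by auto
  then obtain s where "s \<in> S" "set_dist E s U \<noteq> set_dist E s (insert v U)"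
    using solid_resolvingD[OF res, of U "insert v U"] U assms(2) by auto
  moreover have "\<forall>s\<in>V - {v}. set_dist E s (insert v U) = set_dist E s U"
    using set_dist_insert_eq_iff_open_nbhd_subset[OF U(1) \<open>U \<noteq> {}\<close> U(2) assms(2)] dom
    by blast
  ultimately show False
    using assms(3) by (metis subsetD)
qed

lemma solid_resolving_Diff_if_nbhd_undominated:
  assumes "v \<in> V"
    and no_dom: "\<nexists>U. U \<subseteq> V \<and> v \<notin> U \<and> card U \<le> l \<and> open_nbhd V E v \<subseteq> closed_nbhd_set V E U"
  shows "solid_resolving V E l (V - {v})"
  unfolding solid_resolving_def
proof (intro conjI allI impI)
  fix X Y assume XY: "X \<subseteq> V" "Y \<subseteq> V" "X \<noteq> {}" "Y \<noteq> {}" "X \<noteq> Y" "card X \<le> l"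
  show "\<exists>s\<in>V - {v}. set_dist E s X \<noteq> set_dist E s Y"
  proof (rule ccontr)
    assume "\<not> ?thesis"
    then have eq: "\<forall>s\<in>V - {v}. set_dist E s X = set_dist E s Y"
      by blast
    define U where "U = X - {v}"
    have U: "U \<subseteq> V" "v \<notin> U" "U \<subseteq> X"
      using XY(1) unfolding U_def by auto
    have "X \<inter> (V - {v}) = Y \<inter> (V - {v})"
      using set_dist_eq_on_imp_Int_eq[OF XY(1,3,2,4) Diff_subset eq] .
    then have "X - {v} = Y - {v}"
      using XY(1,2) by blast
    then have "X = U \<or> X = insert v U" "Y = U \<or> Y = insert v U"
      unfolding U_def by blast+
    then have pair: "X = U \<and> Y = insert v U \<or> X = insert v U \<and> Y = U"
      using XY(5) by blast
    then have "U \<noteq> {}"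
      using XY(3,4,5) by blast
    have "\<forall>s\<in>V - {v}. set_dist E s (insert v U) = set_dist E s U"
      using pair eq by (metis (no_types, lifting))
    then have "open_nbhd V E v \<subseteq> closed_nbhd_set V E U"
      using set_dist_insert_eq_iff_open_nbhd_subset[OF U(1) \<open>U \<noteq> {}\<close> U(2) assms(1)] by blast
    moreover have "card U \<le> l"
      using card_mono[OF finite_subset_V[OF XY(1)] U(3)] XY(6) by simp
    ultimately show False
      using no_dom U(1,2) by blast
  qed
qed auto

end

theorem mainTheorem4:
  fixes V :: "'a set" and E :: "'a \<Rightarrow> 'a \<Rightarrow> bool" and l :: nat and v :: 'a
  assumes "simple_graph V E" and "connected_graph V E" and "card V \<ge> 2"
    and "l \<ge> 1" and "v \<in> V"
  shows "forced_vertex V E l v \<longleftrightarrow>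
    (\<exists>U. U \<subseteq> V \<and> v \<notin> U \<and> card U \<le> l \<and> open_nbhd V E v \<subseteq> closed_nbhd_set V E U)"
proof -
  interpret connected_simple_graph V E
    using assms by unfold_locales
  show ?thesis
  proof
    assume "forced_vertex V E l v"
    then show "\<exists>U. U \<subseteq> V \<and> v \<notin> U \<and> card U \<le> l \<and> open_nbhd V E v \<subseteq> closed_nbhd_set V E U"
      using solid_resolving_Diff_if_nbhd_undominated[OF assms(5)] unfolding forced_vertex_def by blast
  next
    assume "\<exists>U. U \<subseteq> V \<and> v \<notin> U \<and> card U \<le> l \<and> open_nbhd V E v \<subseteq> closed_nbhd_set V E U"
    then show "forced_vertex V E l v"
      using not_solid_resolving_if_nbhd_dominated[OF assms(3,5)] assms(5) unfolding forced_vertex_def by blast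
  qed
qed

end
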